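(* For every pair of integers $0\le m\le n$ and every $\sigma\ge0$, the system $(\ast)$ has a unique solution $(L,M,N)$ with $L\in(-\pi/2,0]$, $M,N\in[0,\pi/2)$. Moreover: (1) For $0\le m<n$ and $\sigma>0$, $L,N=O(\sigma/n)$ with an absolute implied constant. (2) Additionally, $M=O(\sigma/m)$ uniformly for $1\le m\le n$, $\sigma>0$; and for $m=0<n$, $M=O(\sqrt\sigma)$ for all sufficiently small $\sigma>0$, with an absolute implied constant. (3) For $m=n=0$, $|L|,|M|,|N|\ll\sqrt\sigma$; in particular $L,M,N$ are continuous at $\sigma=0$.
   Context: Fix $r>0$. For integers $m,n\ge0$ and $\sigma\ge0$, the system $(\ast)$ in the unknowns $L,M,N$ is $$\big(2L-M-N-(m+n)\pi\big)\tan L=3r\sigma,\quad \big(2M-N-L+m\pi\big)\tan M=3r\sigma,\quad \big(2N-L-M+n\pi\big)\tan N=3r\sigma .$$ *)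

theory Defs
  imports "HOL-Analysis.Analysis"
begin

definition is_sol :: "real \<Rightarrow> nat \<Rightarrow> nat \<Rightarrow> real \<Rightarrow> real \<Rightarrow> real \<Rightarrow> real \<Rightarrow> bool" where
  "is_sol r m n \<sigma> L M N \<longleftrightarrow>
     (2*L - M - N - real (m+n) * pi) * tan L = 3*r*\<sigma> \<and>
     (2*M - N - L + real m * pi) * tan M = 3*r*\<sigma> \<and>
     (2*N - L - M + real n * pi) * tan N = 3*r*\<sigma> \<and>
     L \<in> {-pi/2<..0} \<and> M \<in> {0..<pi/2} \<and> N \<in> {0..<pi/2}"

definition sol :: "real \<Rightarrow> nat \<Rightarrow> nat \<Rightarrow> real \<Rightarrow> real \<times> real \<times> real" where
  "sol r m n \<sigma> = (THE p. is_sol r m n \<sigma> (fst p) (fst (snd p)) (snd (snd p)))"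

end

(* Write s = 3 r sigma and F s x = 3 x - s cot x.  For s > 0 the system says that each linear
   factor equals s cot of its angle; since the three factors sum to 0, this is equivalent to
   F s L - F s M = (2m+n) pi, F s M - F s N = (n-m) pi and a vanishing cot-sum (reduced_system).
   F s is strictly increasing on (-pi/2, 0) and on (0, pi/2), the latter onto (-inf, 3pi/2), so
   t = F s N determines L and M, all three increase with t and the cot-sum strictly decreases:
   hence uniqueness.  Along this curve the cot-sum is positive where L is close to -pi/2 and
   negative where M is close to pi/2, and the intermediate value theorem gives existence.
   The bounds come from x <= tan x: each equation reads (factor) * tan X = 3 r sigma, where the
   factor is at least n pi/2 (m pi/2 for M), and at least |X| for L and for the larger of M, N. *)

theory Submission
  imports Defs
begin

lemma tan_ge_self:
  fixes x :: real
  assumes "0 \<le> x" "x < pi/2"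
  shows "x \<le> tan x"
  using abs_tan_ge[of x] tan_pos_pi2_le[OF assms] assms by simp

lemma tan_nonzero:
  assumes "-(pi/2) < x" "x < pi/2" "x \<noteq> 0"
  shows "tan x \<noteq> 0"
  using tan_gt_zero[of x] tan_less_zero[of x] assms by (cases "x < 0") auto

lemma isCont_divide_tan:
  assumes "-(pi/2) < x" "x < pi/2" "x \<noteq> 0"
  shows "isCont (\<lambda>x. s / tan x) x"
  using cos_gt_zero_pi[of x] tan_nonzero[of x] assms by (intro continuous_intros) auto

lemma divide_tan_strict_antimono:
  fixes s x y :: real
  assumes "s > 0" "0 < x" "x < y" "y < pi/2"
  shows "s / tan y < s / tan x"
proof -
  have "0 < tan x" "tan x < tan y" using assms by (auto intro!: tan_gt_zero tan_monotone)
  then show ?thesis using assms(1) by (intro divide_strict_left_mono) auto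
qed

lemma divide_tan_strict_antimono_neg:
  fixes s x y :: real
  assumes "s > 0" "-(pi/2) < x" "x < y" "y < 0"
  shows "s / tan y < s / tan x"
  using divide_tan_strict_antimono[OF assms(1), of "-y" "-x"] assms by simp

lemma divide_tan_half_pi_minus: "s / tan (pi/2 - e) = s * tan e"
  unfolding tan_cot by (simp add: divide_inverse)

lemma small_angle_exists:
  fixes s c :: real
  assumes "s \<ge> 0" "c > 0"
  obtains e where "0 < e" "e < pi/2" "3*e + s * tan e < c"
proof
  define d where "d = c / (2*(s+3))"
  have "d > 0" using assms by (simp add: d_def)
  show "0 < arctan d" "arctan d < pi/2" using \<open>d > 0\<close> arctan_ubound by auto
  have "3 * arctan d + s * tan (arctan d) \<le> (3 + s) * d"
    using arctan_le_self[of d] \<open>d > 0\<close> by (simp add: tan_arctan algebra_simps)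
  also have "\<dots> = c/2" using assms by (simp add: d_def field_simps)
  also have "\<dots> < c" using assms by simp
  finally show "3 * arctan d + s * tan (arctan d) < c" .
qed

lemma convex_sign_change_imp_zero:
  fixes f :: "real \<Rightarrow> real"
  assumes "continuous_on T f" "convex T" "t1 \<in> T" "t2 \<in> T" "f t1 \<ge> 0" "f t2 \<le> 0"
  obtains t where "t \<in> T" "f t = 0"
proof -
  have "closed_segment t1 t2 \<subseteq> T" using assms by (intro closed_segment_subset)
  moreover have "0 \<in> closed_segment (f t1) (f t2)"
    using assms by (auto simp: closed_segment_eq_real_ivl)
  ultimately show ?thesis
    using IVT'_closed_segment_real[of 0 f t1 t2] continuous_on_subset[OF assms(1)] that by blast
qed

definition F :: "real \<Rightarrow> real \<Rightarrow> real" where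
  "F s x = 3*x - s / tan x"

lemma F_minus: "F s (-x) = - F s x"
  by (simp add: F_def)

lemma strict_mono_on_F_pos:
  assumes "s > 0"
  shows "strict_mono_on {0<..<pi/2} (F s)"
  by (rule strict_mono_onI) (use divide_tan_strict_antimono[OF assms] in \<open>force simp: F_def\<close>)

lemma strict_mono_on_F_neg:
  assumes "s > 0"
  shows "strict_mono_on {-(pi/2)<..<0} (F s)"
proof (rule strict_mono_onI)
  fix x y :: real
  assume "x \<in> {-(pi/2)<..<0}" "y \<in> {-(pi/2)<..<0}" "x < y"
  then have "F s (-y) < F s (-x)" by (intro strict_mono_onD[OF strict_mono_on_F_pos[OF assms]]) auto
  then show "F s x < F s y" by (simp add: F_minus)
qed

lemma isCont_F:
  assumes "0 < x" "x < pi/2"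
  shows "isCont (F s) x"
  unfolding F_def[abs_def]
  by (rule isCont_diff[OF _ isCont_divide_tan]) (use assms in \<open>auto intro!: continuous_intros\<close>)

lemma F_less_3pi2:
  assumes "s > 0" "0 < x" "x < pi/2"
  shows "F s x < 3*pi/2"
proof -
  have "s / tan x > 0" using assms tan_gt_zero[of x] by simp
  then show ?thesis using assms by (simp add: F_def)
qed

lemma F_half_pi_minus: "F s (pi/2 - e) = 3*pi/2 - (3*e + s * tan e)"
  unfolding F_def divide_tan_half_pi_minus by (simp add: algebra_simps)

lemma F_surj:
  assumes "s > 0" "y < 3*pi/2"
  obtains x where "x \<in> {0<..<pi/2}" "F s x = y"
proof -
  obtain e where e: "0 < e" "e < pi/2" "3*e + s * tan e < 3*pi/2 - y"
    using small_angle_exists[of s "3*pi/2 - y"] assms by auto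
  define b where "b = pi/2 - e"
  have b: "b \<in> {0<..<pi/2}" "y \<le> F s b"
    using e F_half_pi_minus[of s e] by (auto simp: b_def)
  define a where "a = arctan (s / (\<bar>y\<bar> + 6))"
  have a: "a \<in> {0<..<pi/2}" using assms arctan_ubound by (auto simp: a_def)
  have "F s a = 3*a - (\<bar>y\<bar> + 6)" using assms by (simp add: F_def a_def tan_arctan)
  then have "F s a \<le> y" using a pi_less_4 by auto
  then have "a \<le> b" using b a strict_mono_on_less_eq[OF strict_mono_on_F_pos[OF assms(1)]] by force
  moreover have "continuous_on {a..b} (F s)"
    using a b by (intro continuous_at_imp_continuous_on ballI isCont_F) auto
  ultimately obtain x where "a \<le> x" "x \<le> b" "F s x = y"
    using IVT'[of "F s" a y b] \<open>F s a \<le> y\<close> b by blast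
  with a b show ?thesis by (intro that[of x]) auto
qed

definition F_inv :: "real \<Rightarrow> real \<Rightarrow> real" where
  "F_inv s y = (THE x. x \<in> {0<..<pi/2} \<and> F s x = y)"

lemma F_inv:
  assumes "s > 0" "y < 3*pi/2"
  shows "F_inv s y \<in> {0<..<pi/2}" "F s (F_inv s y) = y"
proof -
  have "\<exists>!x. x \<in> {0<..<pi/2} \<and> F s x = y"
    using F_surj[OF assms] strict_mono_on_eqD[OF strict_mono_on_F_pos[OF assms(1)]] by metis
  from theI'[OF this] show "F_inv s y \<in> {0<..<pi/2}" "F s (F_inv s y) = y"
    unfolding F_inv_def by auto
qed

lemma F_inv_F:
  assumes "s > 0" "x \<in> {0<..<pi/2}"
  shows "F_inv s (F s x) = x"
  using F_inv[OF assms(1) F_less_3pi2] assms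
    strict_mono_on_eqD[OF strict_mono_on_F_pos[OF assms(1)]] by auto

lemma isCont_F_inv:
  assumes "s > 0" "y < 3*pi/2"
  shows "isCont (F_inv s) y"
proof -
  define x where "x = F_inv s y"
  have x: "0 < x" "x < pi/2" "F s x = y" using F_inv[OF assms] by (auto simp: x_def)
  define d where "d = min x (pi/2 - x) / 2"
  have "d > 0" using x by (simp add: d_def)
  have near: "0 < z \<and> z < pi/2" if "\<bar>z - x\<bar> \<le> d" for z
  proof -
    have "2*d \<le> x" "2*d \<le> pi/2 - x" by (auto simp: d_def)
    then show ?thesis using that \<open>d > 0\<close> by linarith
  qed
  have "isCont (F_inv s) (F s x)"
    by (rule isCont_inverse_function[OF \<open>d > 0\<close>]) (auto intro!: F_inv_F[OF assms(1)] isCont_F dest: near)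
  then show ?thesis using x by simp
qed

definition reduced_system :: "real \<Rightarrow> real \<Rightarrow> real \<Rightarrow> real \<Rightarrow> real \<Rightarrow> real \<Rightarrow> bool" where
  "reduced_system s a b L M N \<longleftrightarrow>
     L \<in> {-(pi/2)<..<0} \<and> M \<in> {0<..<pi/2} \<and> N \<in> {0<..<pi/2} \<and>
     F s L - F s M = (2*a + b) * pi \<and> F s M - F s N = (b - a) * pi \<and>
     s / tan L + s / tan M + s / tan N = 0"

lemma residuals_eq_cot_sum:
  assumes "F s L - F s M = (2*a + b) * pi" "F s M - F s N = (b - a) * pi"
  shows "(2*L - M - N - (a + b) * pi) - s / tan L = - (s / tan L + s / tan M + s / tan N) / 3"
    and "(2*M - N - L + a * pi) - s / tan M = - (s / tan L + s / tan M + s / tan N) / 3"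
    and "(2*N - L - M + b * pi) - s / tan N = - (s / tan L + s / tan M + s / tan N) / 3"
proof -
  note rel = assms[unfolded F_def]
  show "(2*L - M - N - (a + b) * pi) - s / tan L = - (s / tan L + s / tan M + s / tan N) / 3"
    using rel by argo
  show "(2*M - N - L + a * pi) - s / tan M = - (s / tan L + s / tan M + s / tan N) / 3"
    using rel by argo
  show "(2*N - L - M + b * pi) - s / tan N = - (s / tan L + s / tan M + s / tan N) / 3"
    using rel by argo
qed

lemma is_sol_iff_reduced_system:
  assumes "3*r*\<sigma> > 0"
  shows "is_sol r m n \<sigma> L M N \<longleftrightarrow> reduced_system (3*r*\<sigma>) (real m) (real n) L M N"
proof
  let ?s = "3*r*\<sigma>"
  assume sol: "is_sol r m n \<sigma> L M N"
  then have "tan L \<noteq> 0" "tan M \<noteq> 0" "tan N \<noteq> 0"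
    using assms by (auto simp: is_sol_def)
  with sol have ranges: "L \<in> {-(pi/2)<..<0}" "M \<in> {0<..<pi/2}" "N \<in> {0<..<pi/2}"
    by (auto simp: is_sol_def less_le)
  from sol \<open>tan L \<noteq> 0\<close> \<open>tan M \<noteq> 0\<close> \<open>tan N \<noteq> 0\<close>
  have "2*L - M - N - real (m + n) * pi = ?s / tan L"
    and "2*M - N - L + real m * pi = ?s / tan M"
    and "2*N - L - M + real n * pi = ?s / tan N"
    by (simp_all add: is_sol_def eq_divide_eq)
  with ranges show "reduced_system ?s (real m) (real n) L M N"
    by (simp add: reduced_system_def F_def algebra_simps)
next
  let ?s = "3*r*\<sigma>"
  assume "reduced_system ?s (real m) (real n) L M N"
  then have ranges: "L \<in> {-(pi/2)<..<0}" "M \<in> {0<..<pi/2}" "N \<in> {0<..<pi/2}"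
    and rel: "F ?s L - F ?s M = (2 * real m + real n) * pi" "F ?s M - F ?s N = (real n - real m) * pi"
    and cot_sum: "?s / tan L + ?s / tan M + ?s / tan N = 0"
    by (auto simp: reduced_system_def)
  have "tan L \<noteq> 0" "tan M \<noteq> 0" "tan N \<noteq> 0"
    using ranges tan_nonzero[of L] tan_nonzero[of M] tan_nonzero[of N] by auto
  moreover have "2*L - M - N - real (m + n) * pi = ?s / tan L"
    and "2*M - N - L + real m * pi = ?s / tan M"
    and "2*N - L - M + real n * pi = ?s / tan N"
    using residuals_eq_cot_sum[OF rel] cot_sum by auto
  ultimately show "is_sol r m n \<sigma> L M N"
    using ranges by (simp add: is_sol_def)
qed

lemma is_sol_zero_iff: "is_sol r m n 0 L M N \<longleftrightarrow> L = 0 \<and> M = 0 \<and> N = 0"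
proof
  assume sol: "is_sol r m n 0 L M N"
  then have ranges: "-(pi/2) < L" "L \<le> 0" "0 \<le> M" "M < pi/2" "0 \<le> N" "N < pi/2"
    by (auto simp: is_sol_def)
  have mn: "0 \<le> real m * pi" "0 \<le> real n * pi" by simp_all
  have "L = 0"
  proof (rule ccontr)
    assume "L \<noteq> 0"
    then have "tan L \<noteq> 0" using tan_nonzero[of L] ranges by auto
    with sol have "2*L - M - N - real (m + n) * pi = 0"
      by (simp add: is_sol_def)
    moreover have "real (m + n) * pi = real m * pi + real n * pi"
      by (simp add: distrib_right)
    ultimately show False using \<open>L \<noteq> 0\<close> ranges mn by linarith
  qed
  have "N = 2*M + real m * pi" if "M \<noteq> 0"
    using sol ranges tan_nonzero[of M] that \<open>L = 0\<close> by (auto simp: is_sol_def)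
  moreover have "2*N - M + real n * pi = 0" if "N \<noteq> 0"
    using sol ranges tan_nonzero[of N] that \<open>L = 0\<close> by (auto simp: is_sol_def)
  ultimately show "L = 0 \<and> M = 0 \<and> N = 0"
    using \<open>L = 0\<close> ranges mn by (smt (verit))
qed (simp add: is_sol_def)

lemma reduced_system_F_N_not_less:
  assumes s: "s > 0" and red: "reduced_system s a b L M N" "reduced_system s a b L' M' N'"
    and less: "F s N < F s N'"
  shows False
proof -
  have "F s M < F s M'" "F s L < F s L'"
    using red less by (auto simp: reduced_system_def)
  with less red have "N < N'" "M < M'" "L < L'"
    using strict_mono_on_less[OF strict_mono_on_F_pos[OF s]] strict_mono_on_less[OF strict_mono_on_F_neg[OF s]]
    by (auto simp: reduced_system_def)
  then have "s / tan L' < s / tan L" "s / tan M' < s / tan M" "s / tan N' < s / tan N"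
    using red divide_tan_strict_antimono[OF s] divide_tan_strict_antimono_neg[OF s]
    by (auto simp: reduced_system_def)
  with red show False by (simp add: reduced_system_def)
qed

lemma reduced_system_unique:
  assumes s: "s > 0" and red: "reduced_system s a b L M N" "reduced_system s a b L' M' N'"
  shows "L = L' \<and> M = M' \<and> N = N'"
proof -
  have "F s N = F s N'"
    using reduced_system_F_N_not_less[OF s red] reduced_system_F_N_not_less[OF s red(2,1)] by fastforce
  with red have "F s L = F s L'" "F s M = F s M'"
    by (auto simp: reduced_system_def)
  with \<open>F s N = F s N'\<close> red show ?thesis
    using strict_mono_on_eq[OF strict_mono_on_F_pos[OF s]] strict_mono_on_eq[OF strict_mono_on_F_neg[OF s]]
    by (auto simp: reduced_system_def)
qed

lemma isCont_divide_tan_F_inv: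
  assumes "s > 0" "isCont g t" "g t < 3*pi/2"
  shows "isCont (\<lambda>t. s / tan (F_inv s (g t))) t"
proof -
  have "F_inv s (g t) \<in> {0<..<pi/2}" using F_inv[OF assms(1,3)] by simp
  then have "isCont (\<lambda>x. s / tan x) (F_inv s (g t))" by (intro isCont_divide_tan) auto
  with isCont_o2[OF assms(2) isCont_F_inv[OF assms(1,3)]] show ?thesis by (rule isCont_o2)
qed

lemma cot_sum_pos_near_minus_half_pi:
  assumes rel: "F s L - F s M = (2*a + b) * pi" "F s M - F s N = (b - a) * pi"
    and L: "L = -(pi/2 - e)" and e: "0 < e" "3*e + s * tan e < 1"
    and "0 \<le> M" "0 \<le> N" "0 \<le> (a + b) * pi"
  shows "s / tan L + s / tan M + s / tan N > 0"
proof -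
  have "s / tan L = - (s * tan e)"
    unfolding L tan_minus divide_minus_right divide_tan_half_pi_minus ..
  then have "- (s / tan L + s / tan M + s / tan N) / 3 = 2*L - M - N - (a + b) * pi + s * tan e"
    using residuals_eq_cot_sum(1)[OF rel] by simp
  also have "\<dots> < 0" using assms pi_gt3 by simp
  finally show ?thesis by simp
qed

lemma cot_sum_neg_near_half_pi:
  assumes rel: "F s L - F s M = (2*a + b) * pi" "F s M - F s N = (b - a) * pi"
    and M: "M = pi/2 - e" and e: "0 < e" "3*e + s * tan e < 1"
    and "L \<le> 0" "N < pi/2" "0 \<le> a * pi"
  shows "s / tan L + s / tan M + s / tan N < 0"
proof -
  have "s / tan M = s * tan e"
    unfolding M divide_tan_half_pi_minus ..
  then have "- (s / tan L + s / tan M + s / tan N) / 3 = 2*M - N - L + a * pi - s * tan e"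
    using residuals_eq_cot_sum(2)[OF rel] by simp
  also have "\<dots> > 0" using assms pi_gt3 by simp
  finally show ?thesis by simp
qed

lemma F_inv_chain:
  assumes s: "s > 0" and "0 \<le> a" "a \<le> b" and t: "t \<in> {-3*pi/2 - (a + 2*b)*pi <..< 3*pi/2 - (b - a)*pi}"
  defines "L \<equiv> - F_inv s (-(t + (a + 2*b)*pi))" and "M \<equiv> F_inv s (t + (b - a)*pi)" and "N \<equiv> F_inv s t"
  shows "L \<in> {-(pi/2)<..<0} \<and> M \<in> {0<..<pi/2} \<and> N \<in> {0<..<pi/2} \<and>
    F s L - F s M = (2*a + b)*pi \<and> F s M - F s N = (b - a)*pi"
proof -
  have "0 \<le> (b - a) * pi" using assms by simp
  then have "-(t + (a + 2*b)*pi) < 3*pi/2" "t + (b - a)*pi < 3*pi/2" "t < 3*pi/2"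
    using t by auto
  from F_inv[OF s this(1)] F_inv[OF s this(2)] F_inv[OF s this(3)] show ?thesis
    by (auto simp: L_def M_def N_def F_minus algebra_simps)
qed

lemma reduced_system_exists:
  fixes s a b :: real
  assumes s: "s > 0" and ab: "0 \<le> a" "a \<le> b"
  shows "\<exists>L M N. reduced_system s a b L M N"
proof -
  define T where "T = {-3*pi/2 - (a + 2*b)*pi <..< 3*pi/2 - (b - a)*pi}"
  define L M N where "L t = - F_inv s (-(t + (a + 2*b)*pi))"
    and "M t = F_inv s (t + (b - a)*pi)" and "N t = F_inv s t" for t
  define cot_sum where "cot_sum t = s / tan (L t) + s / tan (M t) + s / tan (N t)" for t
  have curve: "L t \<in> {-(pi/2)<..<0} \<and> M t \<in> {0<..<pi/2} \<and> N t \<in> {0<..<pi/2} \<and>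
      F s (L t) - F s (M t) = (2*a + b)*pi \<and> F s (M t) - F s (N t) = (b - a)*pi" if "t \<in> T" for t
    using F_inv_chain[OF s ab] that unfolding T_def L_def M_def N_def by blast
  have shifts: "0 \<le> (b - a) * pi" "(b - a) * pi \<le> (a + 2*b) * pi" "0 \<le> a * pi" "0 \<le> (a + b) * pi"
    using ab by (simp_all add: mult_right_mono)
  have "continuous_on T cot_sum"
    unfolding cot_sum_def L_def M_def N_def tan_minus divide_minus_right
    by (intro continuous_at_imp_continuous_on ballI isCont_add isCont_minus isCont_divide_tan_F_inv[OF s])
      (use shifts in \<open>auto intro!: continuous_intros simp: T_def\<close>)
  \<comment> \<open>The curve meets \<open>L = -(pi/2 - e)\<close> at \<open>t1\<close> and \<open>M = pi/2 - e\<close> at \<open>t2\<close>.\<close>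
  obtain e where e: "0 < e" "e < pi/2" "3*e + s * tan e < 1"
    using small_angle_exists[of s 1] s by auto
  define x where "x = pi/2 - e"
  have x: "x \<in> {0<..<pi/2}" "F s x = 3*pi/2 - (3*e + s * tan e)"
    using e F_half_pi_minus by (simp_all only: x_def) simp
  have "0 < s * tan e" using e s tan_gt_zero by simp
  define t1 t2 where "t1 = - F s x - (a + 2*b)*pi" and "t2 = F s x - (b - a)*pi"
  have t1: "t1 \<in> T" and t2: "t2 \<in> T"
    unfolding T_def t1_def t2_def greaterThanLessThan_iff
    using x(2) e(1,3) \<open>0 < s * tan e\<close> shifts pi_gt3 by (intro conjI; linarith)+
  have "L t1 = -x" "M t2 = x"
    using F_inv_F[OF s x(1)] by (simp_all add: L_def M_def t1_def t2_def)
  then have "cot_sum t1 > 0" "cot_sum t2 < 0"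
    unfolding cot_sum_def using curve[OF t1] curve[OF t2] e shifts
    by (auto intro!: cot_sum_pos_near_minus_half_pi cot_sum_neg_near_half_pi simp: x_def)
  then obtain t where "t \<in> T" "cot_sum t = 0"
    using convex_sign_change_imp_zero[OF \<open>continuous_on T cot_sum\<close> _ t1 t2] by (auto simp: T_def)
  with curve show ?thesis
    unfolding reduced_system_def cot_sum_def by blast
qed

lemma is_sol_unique:
  assumes "r > 0" "\<sigma> \<ge> 0" "is_sol r m n \<sigma> L M N" "is_sol r m n \<sigma> L' M' N'"
  shows "L = L' \<and> M = M' \<and> N = N'"
proof (cases "\<sigma> = 0")
  case True
  with assms show ?thesis by (simp add: is_sol_zero_iff)
next
  case False
  with assms have pos: "3*r*\<sigma> > 0" by simp
  have "reduced_system (3*r*\<sigma>) m n L M N" "reduced_system (3*r*\<sigma>) m n L' M' N'"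
    using assms(3,4) is_sol_iff_reduced_system[OF pos] by auto
  then show ?thesis by (rule reduced_system_unique[OF pos])
qed

lemma is_sol_exists:
  assumes "r > 0" "\<sigma> \<ge> 0" "m \<le> n"
  shows "\<exists>L M N. is_sol r m n \<sigma> L M N"
proof (cases "\<sigma> = 0")
  case True
  then show ?thesis by (simp add: is_sol_zero_iff)
next
  case False
  with assms have "3*r*\<sigma> > 0" by simp
  with assms show ?thesis by (simp add: is_sol_iff_reduced_system reduced_system_exists)
qed

lemma is_sol_ex1:
  assumes "r > 0" "\<sigma> \<ge> 0" "m \<le> n"
  shows "\<exists>!p. is_sol r m n \<sigma> (fst p) (fst (snd p)) (snd (snd p))"
proof -
  obtain L M N where "is_sol r m n \<sigma> L M N" using is_sol_exists[OF assms] by blast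
  then show ?thesis
    using is_sol_unique[OF assms(1,2)] by (intro ex1I[of _ "(L, M, N)"]) (auto simp: prod_eq_iff)
qed

lemma is_sol_sol:
  assumes "r > 0" "\<sigma> \<ge> 0" "m \<le> n"
  shows "is_sol r m n \<sigma> (fst (sol r m n \<sigma>)) (fst (snd (sol r m n \<sigma>))) (snd (snd (sol r m n \<sigma>)))"
  unfolding sol_def using theI'[OF is_sol_ex1[OF assms]] .

lemma mult_le_of_eq_mult_tan:
  fixes x c E s :: real
  assumes "0 \<le> x" "x < pi/2" "0 \<le> c" "c \<le> E" "E * tan x = s"
  shows "x * c \<le> s"
proof -
  have "x * c \<le> tan x * E"
    using tan_ge_self[OF assms(1,2)] tan_pos_pi2_le[OF assms(1,2)] assms(3,4) by (intro mult_mono) auto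
  then show ?thesis using assms(5) by (simp add: mult.commute)
qed

lemma le_of_mult_half_pi_le:
  fixes x r \<sigma> :: real
  assumes "x * (real k * pi / 2) \<le> 3*r*\<sigma>" "1 \<le> k"
  shows "x \<le> 6*r/pi * \<sigma> / real k"
  using assms by (simp add: field_simps)

lemma is_sol_abs_N_le:
  assumes sol: "is_sol r m n \<sigma> L M N" and "1 \<le> n"
  shows "\<bar>N\<bar> \<le> 6*r/pi * \<sigma> / real n"
proof -
  have eq: "(2*N - L - M + real n * pi) * tan N = 3*r*\<sigma>" and N: "0 \<le> N" "N < pi/2"
    and LM: "L \<le> 0" "M < pi/2"
    using sol by (auto simp: is_sol_def)
  have "pi \<le> real n * pi" using mult_right_mono[of 1 "real n" pi] \<open>1 \<le> n\<close> by simp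
  then have c: "real n * pi / 2 \<le> 2*N - L - M + real n * pi" using N LM by linarith
  have "N * (real n * pi / 2) \<le> 3*r*\<sigma>"
    using mult_le_of_eq_mult_tan[OF N _ c eq] by simp
  then show ?thesis using le_of_mult_half_pi_le[OF _ \<open>1 \<le> n\<close>] N by simp
qed

lemma is_sol_abs_L_le:
  assumes sol: "is_sol r m n \<sigma> L M N" and "1 \<le> n"
  shows "\<bar>L\<bar> \<le> 6*r/pi * \<sigma> / real n"
proof -
  have "(2*L - M - N - real (m + n) * pi) * tan L = 3*r*\<sigma>" and L: "0 \<le> -L" "-L < pi/2"
    and MN: "0 \<le> M" "0 \<le> N"
    using sol by (auto simp: is_sol_def)
  then have eq: "-(2*L - M - N - real (m + n) * pi) * tan (-L) = 3*r*\<sigma>"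
    by (simp only: tan_minus minus_mult_minus)
  have "0 \<le> real m * pi" "0 \<le> real n * pi" by simp_all
  then have c: "real n * pi / 2 \<le> -(2*L - M - N - real (m + n) * pi)"
    using L MN by (simp add: distrib_right)
  have "-L * (real n * pi / 2) \<le> 3*r*\<sigma>"
    using mult_le_of_eq_mult_tan[OF L _ c eq] by simp
  then show ?thesis using le_of_mult_half_pi_le[OF _ \<open>1 \<le> n\<close>] L by simp
qed

lemma is_sol_abs_M_le:
  assumes sol: "is_sol r m n \<sigma> L M N" and "1 \<le> m"
  shows "\<bar>M\<bar> \<le> 6*r/pi * \<sigma> / real m"
proof -
  have eq: "(2*M - N - L + real m * pi) * tan M = 3*r*\<sigma>" and M: "0 \<le> M" "M < pi/2"
    and LN: "L \<le> 0" "N < pi/2"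
    using sol by (auto simp: is_sol_def)
  have "pi \<le> real m * pi" using mult_right_mono[of 1 "real m" pi] \<open>1 \<le> m\<close> by simp
  then have c: "real m * pi / 2 \<le> 2*M - N - L + real m * pi" using M LN by linarith
  have "M * (real m * pi / 2) \<le> 3*r*\<sigma>"
    using mult_le_of_eq_mult_tan[OF M _ c eq] by simp
  then show ?thesis using le_of_mult_half_pi_le[OF _ \<open>1 \<le> m\<close>] M by simp
qed

lemma is_sol_abs_le_sqrt:
  assumes sol: "is_sol r m n \<sigma> L M N"
  shows "\<bar>L\<bar> \<le> sqrt (3*r*\<sigma>) \<and> \<bar>M\<bar> \<le> sqrt (3*r*\<sigma>) \<and> \<bar>N\<bar> \<le> sqrt (3*r*\<sigma>)"
proof -
  have "(2*L - M - N - real (m + n) * pi) * tan L = 3*r*\<sigma>"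
    and eqM: "(2*M - N - L + real m * pi) * tan M = 3*r*\<sigma>"
    and eqN: "(2*N - L - M + real n * pi) * tan N = 3*r*\<sigma>"
    and ranges: "0 \<le> -L" "-L < pi/2" "0 \<le> M" "M < pi/2" "0 \<le> N" "N < pi/2"
    using sol by (auto simp: is_sol_def)
  then have eqL: "-(2*L - M - N - real (m + n) * pi) * tan (-L) = 3*r*\<sigma>"
    by (simp only: tan_minus minus_mult_minus)
  have mn: "0 \<le> real m * pi" "0 \<le> real n * pi" by simp_all
  have "-L \<le> -(2*L - M - N - real (m + n) * pi)"
    using ranges mn unfolding of_nat_add distrib_right by linarith
  from mult_le_of_eq_mult_tan[OF ranges(1,2) ranges(1) this eqL]
  have "L\<^sup>2 \<le> 3*r*\<sigma>" by (simp add: power2_eq_square)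
  moreover have "(max M N)\<^sup>2 \<le> 3*r*\<sigma>"
  proof (cases "N \<le> M")
    case True
    then have "M \<le> 2*M - N - L + real m * pi" using ranges mn by linarith
    from mult_le_of_eq_mult_tan[OF ranges(3,4,3) this eqM] True show ?thesis
      by (simp add: power2_eq_square max_def)
  next
    case False
    then have "N \<le> 2*N - L - M + real n * pi" using ranges mn by linarith
    from mult_le_of_eq_mult_tan[OF ranges(5,6,5) this eqN] False show ?thesis
      by (simp add: power2_eq_square max_def)
  qed
  ultimately show ?thesis
    using real_le_rsqrt[of "\<bar>L\<bar>"] real_le_rsqrt[of "max M N"] ranges by auto
qed

lemma continuous_sol_at_0:
  assumes "r > 0" "m \<le> n"
  shows "continuous (at 0 within {0..}) (sol r m n)"
proof -
  have "sol r m n 0 = 0"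
    using is_sol_sol[OF assms(1) _ assms(2), of 0] by (simp add: is_sol_zero_iff prod_eq_iff)
  moreover have "norm (sol r m n \<sigma>) \<le> 3 * sqrt (3*r*\<sigma>)" if "\<sigma> \<ge> 0" for \<sigma>
  proof -
    obtain L M N where "sol r m n \<sigma> = (L, M, N)" by (metis prod.exhaust)
    moreover have "norm (L, M, N) \<le> \<bar>L\<bar> + (\<bar>M\<bar> + \<bar>N\<bar>)"
      using norm_Pair_le[of L "(M, N)"] norm_Pair_le[of M N] by simp
    ultimately show ?thesis
      using is_sol_abs_le_sqrt[OF is_sol_sol[OF assms(1) that assms(2)]] by simp
  qed
  then have "\<forall>\<^sub>F \<sigma> in at 0 within {0..}. norm (sol r m n \<sigma>) \<le> 3 * sqrt (3*r*\<sigma>)"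
    by (auto simp: eventually_at_filter)
  moreover have "((\<lambda>\<sigma>. 3 * sqrt (3*r*\<sigma>)) \<longlongrightarrow> 0) (at 0 within {0..})"
    by (rule tendsto_eq_intros) (auto intro!: tendsto_eq_intros)
  ultimately show ?thesis
    unfolding continuous_within by (simp add: Lim_null_comparison)
qed

theorem lemma8p1:
  fixes r :: real
  assumes "r > 0"
  shows "(\<forall>m n \<sigma>. m \<le> n \<and> \<sigma> \<ge> 0 \<longrightarrow>
            (\<exists>!p. is_sol r m n \<sigma> (fst p) (fst (snd p)) (snd (snd p))))
       \<and> (\<exists>C. \<forall>m n \<sigma> L M N. m < n \<and> \<sigma> > 0 \<and> is_sol r m n \<sigma> L M N \<longrightarrow>
            \<bar>L\<bar> \<le> C * \<sigma> / real n \<and> \<bar>N\<bar> \<le> C * \<sigma> / real n)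
       \<and> (\<exists>C. \<forall>m n \<sigma> L M N. 1 \<le> m \<and> m \<le> n \<and> \<sigma> > 0 \<and> is_sol r m n \<sigma> L M N \<longrightarrow>
            \<bar>M\<bar> \<le> C * \<sigma> / real m)
       \<and> (\<exists>C. \<forall>n::nat. 0 < n \<longrightarrow> (\<exists>\<delta>>0. \<forall>\<sigma> L M N. 0 < \<sigma> \<and> \<sigma> < \<delta> \<and> is_sol r 0 n \<sigma> L M N \<longrightarrow>
            \<bar>M\<bar> \<le> C * sqrt \<sigma>))
       \<and> (\<exists>C. \<forall>\<sigma> L M N. \<sigma> \<ge> 0 \<and> is_sol r 0 0 \<sigma> L M N \<longrightarrow>
            \<bar>L\<bar> \<le> C * sqrt \<sigma> \<and> \<bar>M\<bar> \<le> C * sqrt \<sigma> \<and> \<bar>N\<bar> \<le> C * sqrt \<sigma>)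
       \<and> continuous (at 0 within {0..}) (\<lambda>\<sigma>. sol r 0 0 \<sigma>)"
  apply (intro conjI)
  subgoal using is_sol_ex1[OF assms] by blast
  subgoal
    by (intro exI[of _ "6*r/pi"] allI impI conjI; elim conjE)
      (rule is_sol_abs_L_le is_sol_abs_N_le; simp)+
  subgoal
    by (intro exI[of _ "6*r/pi"] allI impI; elim conjE) (rule is_sol_abs_M_le; simp)
  \<comment> \<open>The square-root bound holds for every \<open>\<sigma>\<close>, so any \<open>\<delta>\<close> will do.\<close>
  subgoal by (intro exI[of _ "sqrt (3*r)"] allI impI exI[of _ 1])
      (auto dest!: is_sol_abs_le_sqrt simp: real_sqrt_mult)
  subgoal by (intro exI[of _ "sqrt (3*r)"]) (auto dest!: is_sol_abs_le_sqrt simp: real_sqrt_mult)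
  subgoal using continuous_sol_at_0[OF assms, of 0 0] by simp
  done

end
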